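(* Let $\mathbf S$ be a species and, for each $i\ge0$, let $a_i$ be the number of $\mathbf S$-structures on an $i$-element set. For integers $n,x\ge 0$ let $p_n(x)$ be the number of $\mathbf S$-enriched functions from an $n$-element set to an $x$-element set. Then, for all integers $n,x\ge0$, $$p_n(x)=\sum_{\lambda\vdash n}\binom{n}{\lambda}\,\frac{\prod_{i=1}^{\ell(\lambda)}a_{\lambda_i}}{\prod_{j\ge1}\mathrm{mult}_j(\lambda)!}\,(x)_{\ell(\lambda)}.$$
   Context: A species $\mathbf S$ is a functor from the category of finite sets and bijections to itself, with $|\mathbf S[\emptyset]|=1$ and $|\mathbf S[E]|\ge1$ whenever $|E|=1$. The number $a_i=|\mathbf S[E]|$ for $|E|=i$ depends only on $i$. An $\mathbf S$-enriched function from $N$ to $X$ is a pair $(f,(A_y)_{y\in X})$ where $f:N\to X$ and $A_y\in\mathbf S[f^{-1}(y)]$ for each $y\in X$. A partition $\lambda\vdash n$ is a nonincreasing, eventually zero sequence of nonnegative integers with sum $n$. Its length $\ell(\lambda)$ is its number of nonzero parts, and $\mathrm{mult}_j(\lambda)$ is the number of parts equal to $j$. We write $\binom{n}{\lambda}=n!/\prod_i\lambda_i!$ and $(x)_k=x(x-1)\cdots(x-k+1)$. *)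

theory Defs
  imports Complex_Main "HOL-Library.FuncSet"
begin

text \<open>A species on the label type 'a (which must be infinite so that every finite
cardinality occurs): S U is the set of S-structures on the finite set U, and
T U V sigma is the transport of structures along a bijection sigma : U -> V.
Morphisms are represented by HOL functions, identified when they agree on U.\<close>

definition species :: "('a set \<Rightarrow> 'b set) \<Rightarrow> ('a set \<Rightarrow> 'a set \<Rightarrow> ('a \<Rightarrow> 'a) \<Rightarrow> 'b \<Rightarrow> 'b) \<Rightarrow> bool" where
  "species S T \<longleftrightarrow>
     (\<forall>U. finite U \<longrightarrow> finite (S U)) \<and>
     (\<forall>U V \<sigma>. finite U \<and> bij_betw \<sigma> U V \<longrightarrow> (\<forall>s\<in>S U. T U V \<sigma> s \<in> S V)) \<and>
     (\<forall>U V \<sigma> \<sigma>'. finite U \<and> bij_betw \<sigma> U V \<and> (\<forall>x\<in>U. \<sigma> x = \<sigma>' x) \<longrightarrow>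
        (\<forall>s\<in>S U. T U V \<sigma> s = T U V \<sigma>' s)) \<and>
     (\<forall>U s. finite U \<and> s \<in> S U \<longrightarrow> T U U id s = s) \<and>
     (\<forall>U V W \<sigma> \<tau>. finite U \<and> bij_betw \<sigma> U V \<and> bij_betw \<tau> V W \<longrightarrow>
        (\<forall>s\<in>S U. T U W (\<tau> \<circ> \<sigma>) s = T V W \<tau> (T U V \<sigma> s))) \<and>
     card (S {}) = 1 \<and>
     (\<forall>U. finite U \<and> card U = 1 \<longrightarrow> card (S U) \<ge> 1)"

definition species_num :: "('a set \<Rightarrow> 'b set) \<Rightarrow> nat \<Rightarrow> nat" where
  "species_num S i = card (S (SOME U. finite U \<and> card U = i))"

definition enriched_functions :: "('a set \<Rightarrow> 'b set) \<Rightarrow> 'a set \<Rightarrow> 'c set \<Rightarrow> (('a \<Rightarrow> 'c) \<times> ('c \<Rightarrow> 'b)) set" where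
  "enriched_functions S N X =
     {(f, A). f \<in> N \<rightarrow>\<^sub>E X \<and> A \<in> (\<Pi>\<^sub>E y\<in>X. S {u\<in>N. f u = y})}"

text \<open>Partitions of n as nonincreasing sequences (parts indexed from 0); a partition
of n has at most n nonzero parts, so all entries from index n on vanish.\<close>
definition partitions :: "nat \<Rightarrow> (nat \<Rightarrow> nat) set" where
  "partitions n = {p. (\<forall>i. p (Suc i) \<le> p i) \<and> (\<forall>i\<ge>n. p i = 0) \<and> (\<Sum>i<n. p i) = n}"

definition part_len :: "(nat \<Rightarrow> nat) \<Rightarrow> nat" where
  "part_len p = card {i. p i \<noteq> 0}"

definition part_mult :: "(nat \<Rightarrow> nat) \<Rightarrow> nat \<Rightarrow> nat" where
  "part_mult p j = card {i. p i = j}"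

text \<open>Multinomial n!/prod_i lambda_i! (only the first n entries of p can be nonzero).\<close>
definition multinom :: "nat \<Rightarrow> (nat \<Rightarrow> nat) \<Rightarrow> nat" where
  "multinom n p = fact n div (\<Prod>i<n. fact (p i))"

definition falling :: "nat \<Rightarrow> nat \<Rightarrow> nat" where
  "falling x k = (\<Prod>i<k. (x - i))"

end

theory Submission
  imports Defs "HOL-Library.Multiset"
begin

(* An S-enriched function is a map f : N -> X together with an S-structure on each fibre, so
   p_n(x) is the sum over all f of the product of the a_|f^-1(y)|, y in X. This weight only
   depends on the fibre type of f, the multiset of its nonzero fibre sizes, which is a partition
   lambda of n. The maps of type lambda are counted by the multinomial identity twice: a vector
   (c_y) of fibre sizes is realised by n! / prod_y c_y! maps, and the vectors c : X -> {0..n} whose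
   nonzero values form lambda are the maps X -> {0..n} with fibre sizes x - l, mult_1, ..., mult_n,
   of which there are x! / ((x - l)! prod_j mult_j!) = (x)_l / prod_j mult_j!. *)

lemma speciesD:
  assumes "species S T"
  shows species_finite: "finite U \<Longrightarrow> finite (S U)"
    and species_transport_in: "finite U \<Longrightarrow> bij_betw \<sigma> U V \<Longrightarrow> s \<in> S U \<Longrightarrow> T U V \<sigma> s \<in> S V"
    and species_transport_cong: "finite U \<Longrightarrow> bij_betw \<sigma> U V \<Longrightarrow> (\<And>u. u \<in> U \<Longrightarrow> \<sigma> u = \<sigma>' u) \<Longrightarrow>
      s \<in> S U \<Longrightarrow> T U V \<sigma> s = T U V \<sigma>' s"
    and species_transport_id: "finite U \<Longrightarrow> s \<in> S U \<Longrightarrow> T U U id s = s"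
    and species_transport_comp: "finite U \<Longrightarrow> bij_betw \<sigma> U V \<Longrightarrow> bij_betw \<tau> V W \<Longrightarrow> s \<in> S U \<Longrightarrow>
      T U W (\<tau> \<circ> \<sigma>) s = T V W \<tau> (T U V \<sigma> s)"
    and species_card_empty: "card (S {}) = 1"
  using assms unfolding species_def by meson+

lemma species_transport_inverse:
  assumes S: "species S T" and U: "finite U" and \<sigma>: "bij_betw \<sigma> U V" and \<sigma>': "bij_betw \<sigma>' V U"
    and inv: "\<And>u. u \<in> U \<Longrightarrow> \<sigma>' (\<sigma> u) = u" and s: "s \<in> S U"
  shows "T V U \<sigma>' (T U V \<sigma> s) = s"
proof -
  have "T V U \<sigma>' (T U V \<sigma> s) = T U U (\<sigma>' \<circ> \<sigma>) s"
    by (rule species_transport_comp[OF S U \<sigma> \<sigma>' s, symmetric])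
  also have "\<dots> = T U U id s"
    by (rule species_transport_cong[OF S U bij_betw_trans[OF \<sigma> \<sigma>'] _ s]) (simp add: inv)
  also have "\<dots> = s"
    by (rule species_transport_id[OF S U s])
  finally show ?thesis .
qed

lemma species_transport_bij:
  assumes S: "species S T" and U: "finite U" and \<sigma>: "bij_betw \<sigma> U V"
  shows "bij_betw (T U V \<sigma>) (S U) (S V)"
proof -
  define \<sigma>' where "\<sigma>' = inv_into U \<sigma>"
  have \<sigma>': "bij_betw \<sigma>' V U"
    using \<sigma> by (simp add: \<sigma>'_def bij_betw_inv_into)
  have V: "finite V"
    using U \<sigma> bij_betw_finite by blast
  have \<sigma>_inv: "\<sigma>' (\<sigma> u) = u" if "u \<in> U" for u
    using \<sigma> that by (simp add: \<sigma>'_def bij_betw_def inv_into_f_f)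
  have \<sigma>_inv': "\<sigma> (\<sigma>' v) = v" if "v \<in> V" for v
    using \<sigma> that by (simp add: \<sigma>'_def bij_betw_inv_into_right)
  show ?thesis
  proof (rule bij_betwI[where g = "T V U \<sigma>'"])
    show "T U V \<sigma> \<in> S U \<rightarrow> S V"
      using species_transport_in[OF S U \<sigma>] by blast
    show "T V U \<sigma>' \<in> S V \<rightarrow> S U"
      using species_transport_in[OF S V \<sigma>'] by blast
    show "T V U \<sigma>' (T U V \<sigma> s) = s" if "s \<in> S U" for s
      by (rule species_transport_inverse[OF S U \<sigma> \<sigma>' \<sigma>_inv that])
    show "T U V \<sigma> (T V U \<sigma>' s) = s" if "s \<in> S V" for s
      by (rule species_transport_inverse[OF S V \<sigma>' \<sigma> \<sigma>_inv' that])
  qed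
qed

lemma card_species_eq_species_num:
  fixes S :: "'a set \<Rightarrow> 'b set"
  assumes S: "species S T" and U: "finite U"
  shows "card (S U) = species_num S (card U)"
proof -
  define U0 where "U0 = (SOME V :: 'a set. finite V \<and> card V = card U)"
  have "finite U0 \<and> card U0 = card U"
    unfolding U0_def by (rule someI_ex) (use U in blast)
  then obtain \<sigma> where "bij_betw \<sigma> U U0"
    using finite_same_card_bij[OF U, of U0] by (elim conjE) auto
  then have "card (S U) = card (S U0)"
    by (rule bij_betw_same_card[OF species_transport_bij[OF S U]])
  then show ?thesis
    by (simp add: species_num_def U0_def)
qed

lemma species_num_0:
  assumes "species S T"
  shows "species_num S 0 = 1"
  using card_species_eq_species_num[OF assms, of "{}"] species_card_empty[OF assms] by simp

lemma card_enriched_functions: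
  assumes S: "species S T" and N: "finite N" and X: "finite X"
  shows "card (enriched_functions S N X) =
    (\<Sum>f\<in>N \<rightarrow>\<^sub>E X. \<Prod>y\<in>X. species_num S (card {u\<in>N. f u = y}))"
proof -
  have "enriched_functions S N X = Sigma (N \<rightarrow>\<^sub>E X) (\<lambda>f. \<Pi>\<^sub>E y\<in>X. S {u\<in>N. f u = y})"
    by (auto simp: enriched_functions_def)
  also have "card \<dots> = (\<Sum>f\<in>N \<rightarrow>\<^sub>E X. card (\<Pi>\<^sub>E y\<in>X. S {u\<in>N. f u = y}))"
    using N X species_finite[OF S] by (simp add: finite_PiE)
  also have "\<dots> = (\<Sum>f\<in>N \<rightarrow>\<^sub>E X. \<Prod>y\<in>X. species_num S (card {u\<in>N. f u = y}))"
    using N X by (simp add: card_PiE card_species_eq_species_num[OF S])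
  finally show ?thesis .
qed

definition functions_with_fiber_sizes :: "'a set \<Rightarrow> 'b set \<Rightarrow> ('b \<Rightarrow> nat) \<Rightarrow> ('a \<Rightarrow> 'b) set" where
  "functions_with_fiber_sizes A B m = {f \<in> A \<rightarrow>\<^sub>E B. \<forall>b\<in>B. card {a\<in>A. f a = b} = m b}"

lemma bij_betw_functions_with_fiber_sizes_insert:
  assumes b: "b \<notin> B" and K: "K \<subseteq> A" "card K = m b"
  shows "bij_betw (\<lambda>g a. if a \<in> K then b else g a)
    (functions_with_fiber_sizes (A - K) B m)
    {f \<in> functions_with_fiber_sizes A (insert b B) m. {a\<in>A. f a = b} = K}"
proof (rule bij_betwI[where g = "\<lambda>f. restrict f (A - K)"])
  show "(\<lambda>g a. if a \<in> K then b else g a) \<in> functions_with_fiber_sizes (A - K) B m \<rightarrow>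
      {f \<in> functions_with_fiber_sizes A (insert b B) m. {a\<in>A. f a = b} = K}"
  proof
    fix g assume "g \<in> functions_with_fiber_sizes (A - K) B m"
    then have g: "g \<in> (A - K) \<rightarrow>\<^sub>E B" and g_fibers: "\<And>b'. b' \<in> B \<Longrightarrow> card {a\<in>A - K. g a = b'} = m b'"
      by (auto simp: functions_with_fiber_sizes_def)
    let ?h = "\<lambda>a. if a \<in> K then b else g a"
    have fiber_b: "{a\<in>A. ?h a = b} = K"
      using K g b by auto
    have "{a\<in>A. ?h a = b'} = {a\<in>A - K. g a = b'}" if "b' \<in> B" for b'
      using that b by auto
    moreover have "?h \<in> A \<rightarrow>\<^sub>E insert b B"
      using K g by (auto simp: PiE_iff extensional_def)
    ultimately show "?h \<in> {f \<in> functions_with_fiber_sizes A (insert b B) m. {a\<in>A. f a = b} = K}"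
      using fiber_b g_fibers K by (simp add: functions_with_fiber_sizes_def)
  qed
  show "(\<lambda>f. restrict f (A - K)) \<in> {f \<in> functions_with_fiber_sizes A (insert b B) m. {a\<in>A. f a = b} = K} \<rightarrow>
      functions_with_fiber_sizes (A - K) B m"
  proof
    fix f assume f: "f \<in> {f \<in> functions_with_fiber_sizes A (insert b B) m. {a\<in>A. f a = b} = K}"
    then have "f \<in> A \<rightarrow>\<^sub>E insert b B" and fiber_b: "{a\<in>A. f a = b} = K"
      and f_fibers: "\<And>b'. b' \<in> B \<Longrightarrow> card {a\<in>A. f a = b'} = m b'"
      by (auto simp: functions_with_fiber_sizes_def)
    then have "restrict f (A - K) \<in> (A - K) \<rightarrow>\<^sub>E B"
      by auto
    moreover have "{a\<in>A - K. restrict f (A - K) a = b'} = {a\<in>A. f a = b'}" if "b' \<in> B" for b'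
      using that b fiber_b by auto
    ultimately show "restrict f (A - K) \<in> functions_with_fiber_sizes (A - K) B m"
      using f_fibers by (simp add: functions_with_fiber_sizes_def)
  qed
  show "restrict (\<lambda>a. if a \<in> K then b else g a) (A - K) = g"
    if "g \<in> functions_with_fiber_sizes (A - K) B m" for g
    using that by (auto simp: functions_with_fiber_sizes_def PiE_def extensional_def fun_eq_iff)
  show "(\<lambda>a. if a \<in> K then b else restrict f (A - K) a) = f"
    if "f \<in> {f \<in> functions_with_fiber_sizes A (insert b B) m. {a\<in>A. f a = b} = K}" for f
    using that K by (auto simp: functions_with_fiber_sizes_def PiE_def extensional_def fun_eq_iff)
qed

lemma card_functions_with_fiber_sizes:
  assumes "finite B" and "finite A" and "(\<Sum>b\<in>B. m b) = card A"
  shows "card (functions_with_fiber_sizes A B m) * (\<Prod>b\<in>B. fact (m b)) = fact (card A)"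
  using assms
proof (induction B arbitrary: A rule: finite_induct)
  case empty
  then show ?case
    by (simp add: functions_with_fiber_sizes_def)
next
  case (insert b B A)
  let ?F = "functions_with_fiber_sizes A (insert b B) m"
  let ?Ks = "{K. K \<subseteq> A \<and> card K = m b}"
  have b_le: "m b \<le> card A"
    using insert.hyps insert.prems by simp
  have fiber_count: "card {f \<in> ?F. {a\<in>A. f a = b} = K} * (\<Prod>b\<in>B. fact (m b)) = fact (card A - m b)"
    if "K \<in> ?Ks" for K
  proof -
    have K: "K \<subseteq> A" "card K = m b"
      using that by auto
    then have "card (A - K) = card A - m b"
      using insert.prems by (simp add: card_Diff_subset finite_subset)
    moreover have "card {f \<in> ?F. {a\<in>A. f a = b} = K} = card (functions_with_fiber_sizes (A - K) B m)"
      using bij_betw_functions_with_fiber_sizes_insert[of b B K A m] insert.hyps(2) K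
      by (simp add: bij_betw_same_card)
    ultimately show ?thesis
      using insert.IH[of "A - K"] insert.prems insert.hyps by simp
  qed
  have F_split: "?F = (\<Union>K\<in>?Ks. {f \<in> ?F. {a\<in>A. f a = b} = K})"
    by (auto simp: functions_with_fiber_sizes_def)
  have "finite ?F"
    by (rule finite_subset[of _ "A \<rightarrow>\<^sub>E insert b B"])
      (use insert in \<open>auto simp: functions_with_fiber_sizes_def intro: finite_PiE\<close>)
  moreover have "finite ?Ks"
    using insert.prems by simp
  ultimately have "card ?F = (\<Sum>K\<in>?Ks. card {f \<in> ?F. {a\<in>A. f a = b} = K})"
    by (subst F_split, intro card_UN_disjoint) auto
  then have "card ?F * (\<Prod>b\<in>B. fact (m b)) = (card A choose m b) * fact (card A - m b)"
    using fiber_count n_subsets[OF insert.prems(1)] by (simp add: sum_distrib_right)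
  then have "card ?F * (\<Prod>b\<in>B. fact (m b)) * fact (m b) = fact (card A)"
    using binomial_fact_lemma[OF b_le] by (simp add: algebra_simps)
  then show ?case
    using insert.hyps by (simp add: algebra_simps)
qed

definition pos_values :: "'c set \<Rightarrow> ('c \<Rightarrow> nat) \<Rightarrow> nat multiset" where
  "pos_values X c = image_mset c (mset_set {y\<in>X. 0 < c y})"

lemma count_pos_values:
  assumes "finite X"
  shows "count (pos_values X c) j = (if j = 0 then 0 else card {y\<in>X. c y = j})"
proof -
  have "count (pos_values X c) j = card (c -` {j} \<inter> {y\<in>X. 0 < c y})"
    using assms by (simp add: pos_values_def count_image_mset)
  moreover have "c -` {j} \<inter> {y\<in>X. 0 < c y} = (if j = 0 then {} else {y\<in>X. c y = j})"
    by auto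
  ultimately show ?thesis
    by simp
qed

lemma zero_not_in_pos_values: "finite X \<Longrightarrow> 0 \<notin># pos_values X c"
  by (auto simp: pos_values_def)

lemma size_pos_values: "size (pos_values X c) = card {y\<in>X. 0 < c y}"
  by (simp add: pos_values_def)

lemma prod_mset_pos_values:
  assumes "finite X" and "g 0 = 1"
  shows "prod_mset (image_mset g (pos_values X c)) = (\<Prod>y\<in>X. g (c y))"
proof -
  have "(\<Prod>y\<in>X. g (c y)) = (\<Prod>y\<in>{y\<in>X. 0 < c y}. g (c y))"
    using assms by (intro prod.mono_neutral_right) auto
  then show ?thesis
    by (simp add: pos_values_def prod_unfold_prod_mset image_mset.compositionality o_def)
qed

lemma sum_mset_pos_values:
  assumes "finite X"
  shows "sum_mset (pos_values X c) = sum c X"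
proof -
  have "sum c X = (\<Sum>y\<in>{y\<in>X. 0 < c y}. c y)"
    using assms by (intro sum.mono_neutral_right) auto
  then show ?thesis
    by (simp add: pos_values_def sum_unfold_sum_mset)
qed

lemma partitions_antimono:
  assumes "p \<in> partitions n" and "i \<le> j"
  shows "p j \<le> p i"
  using assms lift_Suc_antimono_le[of p] by (auto simp: partitions_def)

lemma partitions_le:
  assumes "p \<in> partitions n"
  shows "p i \<le> n"
proof (cases "i < n")
  case True
  then have "p i \<le> (\<Sum>i<n. p i)"
    by (intro member_le_sum) auto
  then show ?thesis
    using assms by (simp add: partitions_def)
next
  case False
  then show ?thesis
    using assms by (simp add: partitions_def)
qed

lemma
  assumes p: "p \<in> partitions n"
  shows partitions_nonzero_iff: "p i \<noteq> 0 \<longleftrightarrow> i < part_len p"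
    and part_len_le: "part_len p \<le> n"
proof -
  define l where "l = (LEAST i. p i = 0)"
  have "p n = 0"
    using p by (simp add: partitions_def)
  then have l_zero: "p l = 0" and l_le: "l \<le> n"
    unfolding l_def by (auto intro: LeastI Least_le)
  have nonzero_iff: "p i \<noteq> 0 \<longleftrightarrow> i < l" for i
  proof
    assume "p i \<noteq> 0"
    then show "i < l"
      using partitions_antimono[OF p, of l i] l_zero by (cases "i < l") auto
  next
    assume "i < l"
    then show "p i \<noteq> 0"
      unfolding l_def by (rule not_less_Least)
  qed
  then have "{i. p i \<noteq> 0} = {..<l}"
    by auto
  then have "part_len p = l"
    by (simp add: part_len_def)
  then show "p i \<noteq> 0 \<longleftrightarrow> i < part_len p" and "part_len p \<le> n"
    using nonzero_iff l_le by simp_all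
qed

lemma pos_values_partition:
  assumes p: "p \<in> partitions n"
  shows "pos_values {..<n} p = image_mset p (mset_set {..<part_len p})"
proof -
  have "i \<in> {i\<in>{..<n}. 0 < p i} \<longleftrightarrow> i \<in> {..<part_len p}" for i
    using partitions_nonzero_iff[OF p, of i] part_len_le[OF p] by auto
  then have support: "{i\<in>{..<n}. 0 < p i} = {..<part_len p}"
    by blast
  show ?thesis
    unfolding pos_values_def support ..
qed

definition partition_of_mset :: "nat multiset \<Rightarrow> nat \<Rightarrow> nat" where
  "partition_of_mset M i = (if i < size M then rev (sorted_list_of_multiset M) ! i else 0)"

lemma partition_of_mset_pos_values:
  assumes p: "p \<in> partitions n"
  shows "partition_of_mset (pos_values {..<n} p) = p"
proof
  fix i
  define l where "l = part_len p"
  have M: "pos_values {..<n} p = mset (map p [0..<l])"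
    using pos_values_partition[OF p] by (simp add: l_def mset_map lessThan_atLeast0 mset_upt)
  have "sorted (rev (map p [0..<l]))"
    unfolding sorted_rev_iff_nth_mono using partitions_antimono[OF p] by simp
  then have "sort (map p [0..<l]) = rev (map p [0..<l])"
    by (intro properties_for_sort) simp_all
  then have sorted_M: "rev (sorted_list_of_multiset (pos_values {..<n} p)) = map p [0..<l]"
    unfolding M sorted_list_of_multiset_mset by simp
  show "partition_of_mset (pos_values {..<n} p) i = p i"
  proof (cases "i < l")
    case True
    have "size (pos_values {..<n} p) = l"
      unfolding M by simp
    with True show ?thesis
      unfolding partition_of_mset_def by (simp add: sorted_M)
  next
    case False
    then have "p i = 0"
      using partitions_nonzero_iff[OF p, of i] unfolding l_def by blast
    with False show ?thesis
      by (simp add: partition_of_mset_def M)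
  qed
qed

lemma size_le_sum_mset: "0 \<notin># M \<Longrightarrow> size M \<le> sum_mset (M :: nat multiset)"
  by (induction M) auto

lemma
  assumes M: "0 \<notin># M" and n: "sum_mset M = n"
  shows partition_of_mset_in_partitions: "partition_of_mset M \<in> partitions n"
    and pos_values_partition_of_mset: "pos_values {..<n} (partition_of_mset M) = M"
proof -
  define L where "L = rev (sorted_list_of_multiset M)"
  have L: "mset L = M" "length L = size M" "sorted (rev L)"
    using size_mset[of "sorted_list_of_multiset M"] by (simp_all add: L_def)
  have p_eq: "partition_of_mset M i = (if i < length L then L ! i else 0)" for i
    using L(2) by (simp add: partition_of_mset_def L_def)
  have size_le: "length L \<le> n"
    using size_le_sum_mset[OF M] n L by simp
  have antimono: "partition_of_mset M (Suc i) \<le> partition_of_mset M i" for i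
    using L(3) by (auto simp: p_eq sorted_rev_iff_nth_mono)
  have "(\<Sum>i<n. partition_of_mset M i) = (\<Sum>i<length L. L ! i)"
    using size_le by (intro sum.mono_neutral_cong_right) (auto simp: p_eq)
  also have "\<dots> = sum_list L"
    by (simp add: sum_list_sum_nth atLeast0LessThan)
  also have "\<dots> = n"
    using n L(1) sum_mset_sum_list[of L] by simp
  finally show p: "partition_of_mset M \<in> partitions n"
    using antimono size_le by (simp add: partitions_def p_eq)
  have "0 < L ! i" if "i < length L" for i
  proof -
    have "L ! i \<in># M"
      unfolding L(1)[symmetric] using nth_mem[OF that] by simp
    with M show ?thesis
      by (cases "L ! i") auto
  qed
  then have "{i. partition_of_mset M i \<noteq> 0} = {..<length L}"
    by (auto simp: p_eq)
  then have "part_len (partition_of_mset M) = length L"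
    by (simp add: part_len_def)
  then have "pos_values {..<n} (partition_of_mset M) = mset (map (partition_of_mset M) [0..<length L])"
    using pos_values_partition[OF p] by (simp add: mset_map lessThan_atLeast0 mset_upt)
  also have "map (partition_of_mset M) [0..<length L] = L"
    by (rule nth_equalityI) (auto simp: p_eq)
  finally show "pos_values {..<n} (partition_of_mset M) = M"
    using L(1) by simp
qed

lemma bij_betw_partitions_msets:
  "bij_betw (pos_values {..<n}) (partitions n) {M. 0 \<notin># M \<and> sum_mset M = n}"
proof (rule bij_betw_byWitness[where f' = partition_of_mset])
  show "pos_values {..<n} ` partitions n \<subseteq> {M. 0 \<notin># M \<and> sum_mset M = n}"
    by (auto simp: zero_not_in_pos_values sum_mset_pos_values partitions_def)
qed (auto simp: partition_of_mset_pos_values partition_of_mset_in_partitions pos_values_partition_of_mset)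

lemma finite_partitions: "finite (partitions n)"
proof (rule finite_subset)
  show "partitions n \<subseteq> (\<lambda>g i. if i < n then g i else 0) ` ({..<n} \<rightarrow>\<^sub>E {..n})"
  proof
    fix p assume p: "p \<in> partitions n"
    then have "p = (\<lambda>i. if i < n then restrict p {..<n} i else 0)"
      by (auto simp: partitions_def fun_eq_iff)
    moreover have "restrict p {..<n} \<in> {..<n} \<rightarrow>\<^sub>E {..n}"
      using partitions_le[OF p] by auto
    ultimately show "p \<in> (\<lambda>g i. if i < n then g i else 0) ` ({..<n} \<rightarrow>\<^sub>E {..n})"
      by blast
  qed
qed (simp add: finite_PiE)

lemma falling_mult_fact: "l \<le> x \<Longrightarrow> falling x l * fact (x - l) = fact x"
proof (induction l)
  case 0
  then show ?case
    by (simp add: falling_def)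
next
  case (Suc l)
  then have "x - l = Suc (x - Suc l)"
    by simp
  then have "fact (x - l) = (x - l) * fact (x - Suc l)"
    by simp
  moreover have "falling x (Suc l) = falling x l * (x - l)"
    by (simp add: falling_def)
  ultimately show ?case
    using Suc by (simp add: mult.assoc)
qed

lemma falling_eq_0: "x < l \<Longrightarrow> falling x l = 0"
  unfolding falling_def by (rule prod_zero) auto

lemma sum_count_eq_size:
  assumes "set_mset Q \<subseteq> J" and "finite J"
  shows "(\<Sum>j\<in>J. count Q j) = size Q"
proof -
  have "(\<Sum>j\<in>J. count Q j) = (\<Sum>j\<in>set_mset Q. count Q j)"
    using assms by (intro sum.mono_neutral_right) (auto simp: not_in_iff)
  then show ?thesis
    by (simp add: size_multiset_overloaded_eq)
qed

lemma card_functions_with_pos_values: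
  fixes X :: "'c set" and Q :: "nat multiset"
  assumes X: "finite X" and Q: "0 \<notin># Q" "set_mset Q \<subseteq> {..K}"
  shows "card {c \<in> X \<rightarrow>\<^sub>E {..K}. pos_values X c = Q} * (\<Prod>j\<in>{1..K}. fact (count Q j))
    = falling (card X) (size Q)"
proof (cases "size Q \<le> card X")
  case True
  \<comment> \<open>A map with nonzero values Q takes the value 0 exactly card X - size Q times.\<close>
  define m where "m j = (if j = 0 then card X - size Q else count Q j)" for j
  have "pos_values X c = Q \<longleftrightarrow> (\<forall>j\<in>{..K}. card {y\<in>X. c y = j} = m j)"
    if c: "c \<in> X \<rightarrow>\<^sub>E {..K}" for c
  proof
    assume c_Q: "pos_values X c = Q"
    have "card {y\<in>X. c y = 0} = card X - card {y\<in>X. 0 < c y}"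
      using X by (subst card_Diff_subset[symmetric]) (auto intro: arg_cong[where f = card])
    then show "\<forall>j\<in>{..K}. card {y\<in>X. c y = j} = m j"
      using c_Q count_pos_values[OF X, of c] by (auto simp: m_def size_pos_values)
  next
    assume fibers: "\<forall>j\<in>{..K}. card {y\<in>X. c y = j} = m j"
    show "pos_values X c = Q"
    proof (rule multiset_eqI)
      fix j
      show "count (pos_values X c) j = count Q j"
      proof (cases "j \<le> K")
        case True
        then show ?thesis
          using fibers Q(1) by (auto simp: count_pos_values[OF X] m_def not_in_iff)
      next
        case False
        then have no_fiber: "{y\<in>X. c y = j} = {}" and "j \<notin># Q"
          using c Q(2) by auto
        then show ?thesis
          unfolding count_pos_values[OF X] no_fiber by (simp add: not_in_iff)
      qed
    qed
  qed
  then have set_eq: "{c \<in> X \<rightarrow>\<^sub>E {..K}. pos_values X c = Q} = functions_with_fiber_sizes X {..K} m"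
    by (auto simp: functions_with_fiber_sizes_def)
  have split_0: "{..K} = insert 0 {1..K}"
    by auto
  have "set_mset Q \<subseteq> {1..K}"
  proof
    fix j assume j: "j \<in># Q"
    have "j \<noteq> 0"
      using Q(1) j by (cases "j = 0") simp_all
    moreover have "j \<le> K"
      using Q(2) j by auto
    ultimately show "j \<in> {1..K}"
      by simp
  qed
  then have "(\<Sum>j\<in>{1..K}. m j) = size Q"
    using sum_count_eq_size[of Q "{1..K}"] by (simp add: m_def)
  then have "(\<Sum>j\<in>{..K}. m j) = card X"
    using True by (simp add: split_0 m_def)
  then have count_eq: "card {c \<in> X \<rightarrow>\<^sub>E {..K}. pos_values X c = Q} * (\<Prod>j\<in>{..K}. fact (m j))
      = fact (card X)"
    unfolding set_eq by (intro card_functions_with_fiber_sizes[OF _ X]) simp_all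
  have "card {c \<in> X \<rightarrow>\<^sub>E {..K}. pos_values X c = Q} * (\<Prod>j\<in>{1..K}. fact (count Q j))
      * fact (card X - size Q) = card {c \<in> X \<rightarrow>\<^sub>E {..K}. pos_values X c = Q} * (\<Prod>j\<in>{..K}. fact (m j))"
    by (simp add: split_0 m_def)
  also have "\<dots> = falling (card X) (size Q) * fact (card X - size Q)"
    using count_eq falling_mult_fact[OF True] by simp
  finally show ?thesis
    by simp
next
  case False
  have "size (pos_values X c) \<le> card X" for c
    using X by (simp add: size_pos_values card_mono)
  then have no_c: "{c \<in> X \<rightarrow>\<^sub>E {..K}. pos_values X c = Q} = {}"
    using False by auto
  show ?thesis
    unfolding no_c using False by (simp add: falling_eq_0)
qed

lemma card_eq_sum_card_fibers:
  assumes "finite A" and "finite B" and "g ` A \<subseteq> B"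
  shows "card A = (\<Sum>b\<in>B. card {a\<in>A. g a = b})"
  using sum.group[OF assms, of "\<lambda>_. 1 :: nat"] by simp

lemma pos_values_restrict:
  assumes "finite X"
  shows "pos_values X (restrict c X) = pos_values X c"
proof -
  have "{y\<in>X. 0 < restrict c X y} = {y\<in>X. 0 < c y}"
    by auto
  then show ?thesis
    unfolding pos_values_def using assms by (auto intro: image_mset_cong)
qed

definition fiber_type :: "'a set \<Rightarrow> 'c set \<Rightarrow> ('a \<Rightarrow> 'c) \<Rightarrow> nat multiset" where
  "fiber_type N X f = pos_values X (\<lambda>y. card {u\<in>N. f u = y})"

lemma card_functions_of_fiber_type:
  assumes N: "finite N" and X: "finite X" and Q: "sum_mset Q = card N"
  shows "card {f \<in> N \<rightarrow>\<^sub>E X. fiber_type N X f = Q} * prod_mset (image_mset fact Q)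
    = card {c \<in> X \<rightarrow>\<^sub>E {..card N}. pos_values X c = Q} * fact (card N)"
proof -
  let ?C = "{c \<in> X \<rightarrow>\<^sub>E {..card N}. pos_values X c = Q}"
  define sizes where "sizes f = restrict (\<lambda>y. card {u\<in>N. f u = y}) X" for f :: "'a \<Rightarrow> 'b"
  have sizes_in: "sizes f \<in> X \<rightarrow>\<^sub>E {..card N}" for f
    using N by (auto simp: sizes_def card_mono)
  have type_eq: "fiber_type N X f = pos_values X (sizes f)" for f
    by (simp add: sizes_def fiber_type_def pos_values_restrict[OF X])
  have fin_C: "finite ?C"
    using X by (auto intro: finite_subset[OF _ finite_PiE[of X "\<lambda>_. {..card N}"]])
  have fiber_count: "card {f \<in> N \<rightarrow>\<^sub>E X. sizes f = c} * prod_mset (image_mset fact Q) = fact (card N)"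
    if c: "c \<in> ?C" for c
  proof -
    have "sum c X = card N"
      using c Q sum_mset_pos_values[OF X, of c] by simp
    then have "card (functions_with_fiber_sizes N X c) * (\<Prod>y\<in>X. fact (c y)) = fact (card N)"
      by (rule card_functions_with_fiber_sizes[OF X N])
    moreover have "{f \<in> N \<rightarrow>\<^sub>E X. sizes f = c} = functions_with_fiber_sizes N X c"
      using c by (auto simp: sizes_def functions_with_fiber_sizes_def PiE_def extensional_def fun_eq_iff)
    moreover have "prod_mset (image_mset fact Q) = (\<Prod>y\<in>X. fact (c y) :: nat)"
      using c prod_mset_pos_values[OF X, of fact c] by simp
    ultimately show ?thesis
      by simp
  qed
  have "{f \<in> N \<rightarrow>\<^sub>E X. fiber_type N X f = Q} = {f \<in> N \<rightarrow>\<^sub>E X. sizes f \<in> ?C}"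
    using sizes_in by (auto simp: type_eq)
  then have "card {f \<in> N \<rightarrow>\<^sub>E X. fiber_type N X f = Q}
      = (\<Sum>c\<in>?C. card {f \<in> {f \<in> N \<rightarrow>\<^sub>E X. sizes f \<in> ?C}. sizes f = c})"
    by (simp only:) (rule card_eq_sum_card_fibers, use N X fin_C in \<open>auto simp: finite_PiE\<close>)
  also have "\<dots> = (\<Sum>c\<in>?C. card {f \<in> N \<rightarrow>\<^sub>E X. sizes f = c})"
    by (intro sum.cong refl arg_cong[where f = card]) auto
  finally have "card {f \<in> N \<rightarrow>\<^sub>E X. fiber_type N X f = Q} = (\<Sum>c\<in>?C. card {f \<in> N \<rightarrow>\<^sub>E X. sizes f = c})" .
  then show ?thesis
    using fiber_count by (simp add: sum_distrib_right)
qed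

lemma multinom_mult_prod_fact:
  assumes "p \<in> partitions n"
  shows "multinom n p * (\<Prod>i<n. fact (p i)) = fact n"
proof -
  have "(\<Sum>i<n. p i) = card {..<n}"
    using assms by (simp add: partitions_def)
  then have "card (functions_with_fiber_sizes {..<n} {..<n} p) * (\<Prod>i<n. fact (p i)) = fact n"
    using card_functions_with_fiber_sizes[of "{..<n}" "{..<n}" p] by simp
  then have "(\<Prod>i<n. fact (p i)) dvd (fact n :: nat)"
    by (metis dvd_triv_right)
  then show ?thesis
    by (simp add: multinom_def)
qed

lemma count_pos_values_partition:
  assumes p: "p \<in> partitions n" and "0 < j"
  shows "count (pos_values {..<n} p) j = part_mult p j"
proof -
  have "i < n" if "p i = j" for i
  proof (rule ccontr)
    assume "\<not> i < n"
    then have "p i = 0"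
      using p by (simp add: partitions_def)
    with that \<open>0 < j\<close> show False
      by simp
  qed
  then have "{i\<in>{..<n}. p i = j} = {i. p i = j}"
    by auto
  then show ?thesis
    using \<open>0 < j\<close> by (simp add: count_pos_values part_mult_def)
qed

lemma prod_mset_pos_values_partition:
  assumes "p \<in> partitions n"
  shows "prod_mset (image_mset g (pos_values {..<n} p)) = (\<Prod>i<part_len p. g (p i))"
  by (simp add: pos_values_partition[OF assms] prod_unfold_prod_mset image_mset.compositionality o_def)

lemma card_functions_of_partition_type:
  assumes p: "p \<in> partitions n" and N: "finite N" "card N = n" and X: "finite X"
  shows "card {f \<in> N \<rightarrow>\<^sub>E X. fiber_type N X f = pos_values {..<n} p} * (\<Prod>j\<in>{1..n}. fact (part_mult p j))
    = multinom n p * falling (card X) (part_len p)"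
proof -
  define Q where "Q = pos_values {..<n} p"
  define PF where "PF = (\<Prod>i<n. fact (p i) :: nat)"
  define PM where "PM = (\<Prod>j\<in>{1..n}. fact (part_mult p j) :: nat)"
  let ?F = "{f \<in> N \<rightarrow>\<^sub>E X. fiber_type N X f = Q}"
  let ?C = "{c \<in> X \<rightarrow>\<^sub>E {..n}. pos_values X c = Q}"
  have Q_prod: "prod_mset (image_mset fact Q) = PF"
    by (simp add: Q_def PF_def prod_mset_pos_values)
  have Q_sum: "sum_mset Q = n"
    using p by (simp add: Q_def sum_mset_pos_values partitions_def)
  have F_count: "card ?F * PF = card ?C * fact n"
    using card_functions_of_fiber_type[OF N(1) X, of Q] N Q_sum Q_prod by simp
  have C_count: "card ?C * PM = falling (card X) (part_len p)"
  proof -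
    have "0 \<notin># Q"
      by (simp add: Q_def zero_not_in_pos_values)
    moreover have "set_mset Q \<subseteq> {..n}"
      using partitions_le[OF p] by (auto simp: Q_def pos_values_def)
    ultimately have "card ?C * (\<Prod>j\<in>{1..n}. fact (count Q j)) = falling (card X) (size Q)"
      by (rule card_functions_with_pos_values[OF X])
    moreover have "(\<Prod>j\<in>{1..n}. fact (count Q j)) = PM"
      unfolding PM_def Q_def by (intro prod.cong refl) (simp add: count_pos_values_partition[OF p])
    moreover have "size Q = part_len p"
      by (simp add: Q_def pos_values_partition[OF p])
    ultimately show ?thesis
      by simp
  qed
  have "card ?F * PM * PF = card ?C * PM * fact n"
    using F_count by (simp add: algebra_simps)
  also have "\<dots> = multinom n p * falling (card X) (part_len p) * PF"
    using C_count multinom_mult_prod_fact[OF p] by (simp add: PF_def algebra_simps)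
  finally have "card ?F * PM * PF = multinom n p * falling (card X) (part_len p) * PF" .
  moreover have "PF \<noteq> 0"
    by (simp add: PF_def)
  ultimately show ?thesis
    by (simp add: Q_def PM_def)
qed

lemma real_card_functions_of_partition_type:
  assumes p: "p \<in> partitions n" and N: "finite N" "card N = n" and X: "finite X"
  shows "real (card {f \<in> N \<rightarrow>\<^sub>E X. fiber_type N X f = pos_values {..<n} p}) =
    real (multinom n p) * real (falling (card X) (part_len p)) /
    real (\<Prod>j\<in>{1..n}. fact (part_mult p j) :: nat)"
proof -
  have "real (card {f \<in> N \<rightarrow>\<^sub>E X. fiber_type N X f = pos_values {..<n} p}) *
      real (\<Prod>j\<in>{1..n}. fact (part_mult p j) :: nat) =
      real (multinom n p) * real (falling (card X) (part_len p))"
    using arg_cong[OF card_functions_of_partition_type[OF assms], of real] unfolding of_nat_mult .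
  moreover have "real (\<Prod>j\<in>{1..n}. fact (part_mult p j) :: nat) \<noteq> 0"
    by (simp only: of_nat_eq_0_iff prod_zero_iff[OF finite_atLeastAtMost]) simp
  ultimately show ?thesis
    by (simp only: eq_divide_eq) simp
qed

lemma sum_functions_by_fiber_type:
  fixes g :: "nat multiset \<Rightarrow> nat"
  assumes N: "finite N" "card N = n" and X: "finite X"
  shows "(\<Sum>f\<in>N \<rightarrow>\<^sub>E X. g (fiber_type N X f)) =
    (\<Sum>p\<in>partitions n. card {f \<in> N \<rightarrow>\<^sub>E X. fiber_type N X f = pos_values {..<n} p} * g (pos_values {..<n} p))"
proof -
  let ?Ms = "{M. 0 \<notin># M \<and> sum_mset M = n}"
  have bij: "bij_betw (pos_values {..<n}) (partitions n) ?Ms"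
    by (rule bij_betw_partitions_msets)
  then have "finite ?Ms"
    using finite_partitions bij_betw_finite by blast
  moreover have "fiber_type N X ` (N \<rightarrow>\<^sub>E X) \<subseteq> ?Ms"
  proof
    fix M assume "M \<in> fiber_type N X ` (N \<rightarrow>\<^sub>E X)"
    then obtain f where f: "f \<in> N \<rightarrow>\<^sub>E X" and M: "M = fiber_type N X f"
      by blast
    have "sum_mset M = (\<Sum>y\<in>X. card {u\<in>N. f u = y})"
      by (simp add: M fiber_type_def sum_mset_pos_values X)
    also have "\<dots> = n"
      using card_eq_sum_card_fibers[OF N(1) X, of f] f N(2) by (auto simp: PiE_iff image_subset_iff)
    finally show "M \<in> ?Ms"
      using X by (simp add: M fiber_type_def zero_not_in_pos_values)
  qed
  ultimately have "(\<Sum>f\<in>N \<rightarrow>\<^sub>E X. g (fiber_type N X f)) =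
      (\<Sum>M\<in>?Ms. \<Sum>f\<in>{f \<in> N \<rightarrow>\<^sub>E X. fiber_type N X f = M}. g (fiber_type N X f))"
    using N X by (intro sum.group[symmetric]) (auto simp: finite_PiE)
  also have "\<dots> = (\<Sum>M\<in>?Ms. card {f \<in> N \<rightarrow>\<^sub>E X. fiber_type N X f = M} * g M)"
    by (intro sum.cong refl) simp
  also have "\<dots> = (\<Sum>p\<in>partitions n.
      card {f \<in> N \<rightarrow>\<^sub>E X. fiber_type N X f = pos_values {..<n} p} * g (pos_values {..<n} p))"
    by (rule sum.reindex_bij_betw[OF bij, symmetric])
  finally show ?thesis .
qed

theorem mainTheorem2:
  fixes S :: "'a set \<Rightarrow> 'b set"
    and T :: "'a set \<Rightarrow> 'a set \<Rightarrow> ('a \<Rightarrow> 'a) \<Rightarrow> 'b \<Rightarrow> 'b"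
    and N :: "'a set" and X :: "'c set" and n x :: nat
  assumes "infinite (UNIV :: 'a set)"
    and "species S T"
    and "finite N" and "card N = n"
    and "finite X" and "card X = x"
  shows "real (card (enriched_functions S N X)) =
    (\<Sum>p\<in>partitions n.
        real (multinom n p) *
        (real (\<Prod>i<part_len p. species_num S (p i)) /
         real (\<Prod>j\<in>{1..n}. (fact (part_mult p j) :: nat))) *
        real (falling x (part_len p)))"
proof -
  note S = assms(2) and N = assms(3,4) and X = assms(5,6)
  let ?a = "species_num S"
  let ?F = "\<lambda>p. {f \<in> N \<rightarrow>\<^sub>E X. fiber_type N X f = pos_values {..<n} p}"
  have "card (enriched_functions S N X) = (\<Sum>f\<in>N \<rightarrow>\<^sub>E X. \<Prod>y\<in>X. ?a (card {u\<in>N. f u = y}))"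
    using card_enriched_functions[OF S N(1) X(1)] .
  also have "\<dots> = (\<Sum>f\<in>N \<rightarrow>\<^sub>E X. prod_mset (image_mset ?a (fiber_type N X f)))"
    using X(1) species_num_0[OF S] by (simp add: fiber_type_def prod_mset_pos_values)
  also have "\<dots> = (\<Sum>p\<in>partitions n. card (?F p) * (\<Prod>i<part_len p. ?a (p i)))"
    using sum_functions_by_fiber_type[OF N X(1), of "\<lambda>M. prod_mset (image_mset ?a M)"]
    by (simp add: prod_mset_pos_values_partition)
  finally have "real (card (enriched_functions S N X)) =
      (\<Sum>p\<in>partitions n. real (card (?F p)) * real (\<Prod>i<part_len p. ?a (p i)))"
    by simp
  also have "\<dots> = (\<Sum>p\<in>partitions n. real (multinom n p) *
      (real (\<Prod>i<part_len p. ?a (p i)) / real (\<Prod>j\<in>{1..n}. fact (part_mult p j) :: nat)) *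
      real (falling x (part_len p)))"
    using real_card_functions_of_partition_type[OF _ N X(1)] X(2) by (intro sum.cong refl) simp
  finally show ?thesis .
qed

end
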